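(* Let $\mathbf K$ be an M$\Delta$C. Consider the conditions: (a) there exist two proper coprime complementary thick ideals of $\mathbf K$; (b) there exist two proper coprime complementary principal ideals of $\mathbf K$; (c) $\operatorname{Spc}\mathbf K$ is disconnected, i.e. there exist proper disjoint closed subsets $Z_1,Z_2$ with $\operatorname{Spc}\mathbf K=Z_1\sqcup Z_2$. Then (a) $\Leftrightarrow$ (b), and these imply (c). If moreover either (i) $\mathbf K$ is generated by a single object $G$ as a thick (triangulated) subcategory, or (ii) $\operatorname{Spc}\mathbf K$ is a Noetherian topological space, then (a), (b), (c) are all equivalent.
   Context: M$\Delta$C: triangulated category with monoidal structure $(\otimes,\mathbf 1)$, $\otimes$ exact in each variable. Thick ideal: full triangulated subcategory closed under direct summands and two-sided tensoring with arbitrary objects; $\langle\mathcal S\rangle$ the smallest thick ideal containing $\mathcal S$; principal ideal: $\langle A\rangle$. $\mathbf I,\mathbf J$ coprime if $\langle\mathbf I\cup\mathbf J\rangle=\mathbf K$. Prime ideal: proper thick ideal $\mathbf P$ such that $\mathbf I\otimes\mathbf J\subseteq\mathbf P$ for thick ideals $\mathbf I,\mathbf J$ implies $\mathbf I\subseteq\mathbf P$ or $\mathbf J\subseteq\mathbf P$. The prime radical of $\mathbf K$ is the intersection of all prime ideals. Two thick ideals are complementary if their intersection is contained in the prime radical. $\operatorname{Spc}\mathbf K$: set of prime ideals with closed sets generated (by intersections) from $V(A)=\{\mathbf P:A\notin\mathbf P\}$. *)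

theory Defs
  imports Main
begin

text \<open>Objects have type 'o, morphisms type 'm.  Every element of 'o is an object
of K and every element of 'm is a morphism (with domain and codomain).\<close>

record ('o, 'm) mdc =
  Dom  :: "'m \<Rightarrow> 'o"
  Cod  :: "'m \<Rightarrow> 'o"
  Cmp  :: "'m \<Rightarrow> 'm \<Rightarrow> 'm"          \<comment> \<open>Cmp g f = g after f\<close>
  Idm  :: "'o \<Rightarrow> 'm"
  Addm :: "'m \<Rightarrow> 'm \<Rightarrow> 'm"
  Negm :: "'m \<Rightarrow> 'm"
  Zerom :: "'o \<Rightarrow> 'o \<Rightarrow> 'm"
  Sh   :: "'o \<Rightarrow> 'o"
  ShM  :: "'m \<Rightarrow> 'm"
  Dtri :: "'m \<Rightarrow> 'm \<Rightarrow> 'm \<Rightarrow> bool"   \<comment> \<open>distinguished triangles X -f-> Y -g-> Z -h-> Sh X\<close>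
  Ten  :: "'o \<Rightarrow> 'o \<Rightarrow> 'o"
  TenM :: "'m \<Rightarrow> 'm \<Rightarrow> 'm"
  One  :: "'o"
  Asc  :: "'o \<Rightarrow> 'o \<Rightarrow> 'o \<Rightarrow> 'm"
  Lu   :: "'o \<Rightarrow> 'm"
  Ru   :: "'o \<Rightarrow> 'm"
  ThL  :: "'o \<Rightarrow> 'o \<Rightarrow> 'm"          \<comment> \<open>ThL X A : (Sh X)\<otimes>A \<rightarrow> Sh (X\<otimes>A)\<close>
  ThR  :: "'o \<Rightarrow> 'o \<Rightarrow> 'm"          \<comment> \<open>ThR A X : A\<otimes>(Sh X) \<rightarrow> Sh (A\<otimes>X)\<close>

definition hom :: "('o,'m,'z) mdc_scheme \<Rightarrow> 'o \<Rightarrow> 'o \<Rightarrow> 'm set" where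
  "hom C X Y = {f. Dom C f = X \<and> Cod C f = Y}"

definition iso :: "('o,'m,'z) mdc_scheme \<Rightarrow> 'm \<Rightarrow> bool" where
  "iso C f \<longleftrightarrow> (\<exists>g. g \<in> hom C (Cod C f) (Dom C f) \<and>
      Cmp C g f = Idm C (Dom C f) \<and> Cmp C f g = Idm C (Cod C f))"

definition is_zero_obj :: "('o,'m,'z) mdc_scheme \<Rightarrow> 'o \<Rightarrow> bool" where
  "is_zero_obj C Z \<longleftrightarrow> (\<forall>X. hom C Z X = {Zerom C Z X} \<and> hom C X Z = {Zerom C X Z})"

definition is_category :: "('o,'m,'z) mdc_scheme \<Rightarrow> bool" where
  "is_category C \<longleftrightarrow>
     (\<forall>X. Idm C X \<in> hom C X X) \<and>
     (\<forall>X Y Z f g. f \<in> hom C X Y \<longrightarrow> g \<in> hom C Y Z \<longrightarrow> Cmp C g f \<in> hom C X Z) \<and>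
     (\<forall>X Y f. f \<in> hom C X Y \<longrightarrow> Cmp C (Idm C Y) f = f \<and> Cmp C f (Idm C X) = f) \<and>
     (\<forall>W X Y Z f g h. f \<in> hom C W X \<longrightarrow> g \<in> hom C X Y \<longrightarrow> h \<in> hom C Y Z \<longrightarrow>
        Cmp C h (Cmp C g f) = Cmp C (Cmp C h g) f)"

definition is_additive :: "('o,'m,'z) mdc_scheme \<Rightarrow> bool" where
  "is_additive C \<longleftrightarrow>
     (\<forall>X Y f g. f \<in> hom C X Y \<longrightarrow> g \<in> hom C X Y \<longrightarrow> Addm C f g \<in> hom C X Y) \<and>
     (\<forall>X Y f. f \<in> hom C X Y \<longrightarrow> Negm C f \<in> hom C X Y) \<and>
     (\<forall>X Y. Zerom C X Y \<in> hom C X Y) \<and>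
     (\<forall>X Y f g h. f \<in> hom C X Y \<longrightarrow> g \<in> hom C X Y \<longrightarrow> h \<in> hom C X Y \<longrightarrow>
        Addm C (Addm C f g) h = Addm C f (Addm C g h)) \<and>
     (\<forall>X Y f g. f \<in> hom C X Y \<longrightarrow> g \<in> hom C X Y \<longrightarrow> Addm C f g = Addm C g f) \<and>
     (\<forall>X Y f. f \<in> hom C X Y \<longrightarrow> Addm C f (Zerom C X Y) = f) \<and>
     (\<forall>X Y f. f \<in> hom C X Y \<longrightarrow> Addm C f (Negm C f) = Zerom C X Y) \<and>
     (\<forall>X Y Z f f' g. f \<in> hom C X Y \<longrightarrow> f' \<in> hom C X Y \<longrightarrow> g \<in> hom C Y Z \<longrightarrow>
        Cmp C g (Addm C f f') = Addm C (Cmp C g f) (Cmp C g f')) \<and>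
     (\<forall>X Y Z f g g'. f \<in> hom C X Y \<longrightarrow> g \<in> hom C Y Z \<longrightarrow> g' \<in> hom C Y Z \<longrightarrow>
        Cmp C (Addm C g g') f = Addm C (Cmp C g f) (Cmp C g' f)) \<and>
     (\<exists>Z. is_zero_obj C Z) \<and>
     (\<forall>X Y. \<exists>P i1 i2 p1 p2. i1 \<in> hom C X P \<and> i2 \<in> hom C Y P \<and> p1 \<in> hom C P X \<and> p2 \<in> hom C P Y \<and>
        Cmp C p1 i1 = Idm C X \<and> Cmp C p2 i2 = Idm C Y \<and>
        Cmp C p2 i1 = Zerom C X Y \<and> Cmp C p1 i2 = Zerom C Y X \<and>
        Addm C (Cmp C i1 p1) (Cmp C i2 p2) = Idm C P)"

definition is_shift :: "('o,'m,'z) mdc_scheme \<Rightarrow> bool" where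
  "is_shift C \<longleftrightarrow>
     (\<forall>X Y f. f \<in> hom C X Y \<longrightarrow> ShM C f \<in> hom C (Sh C X) (Sh C Y)) \<and>
     (\<forall>X. ShM C (Idm C X) = Idm C (Sh C X)) \<and>
     (\<forall>X Y Z f g. f \<in> hom C X Y \<longrightarrow> g \<in> hom C Y Z \<longrightarrow> ShM C (Cmp C g f) = Cmp C (ShM C g) (ShM C f)) \<and>
     (\<forall>X Y f g. f \<in> hom C X Y \<longrightarrow> g \<in> hom C X Y \<longrightarrow> ShM C (Addm C f g) = Addm C (ShM C f) (ShM C g)) \<and>
     (\<forall>X Y. bij_betw (ShM C) (hom C X Y) (hom C (Sh C X) (Sh C Y))) \<and>
     (\<forall>Y. \<exists>X u. u \<in> hom C (Sh C X) Y \<and> iso C u)"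

definition is_triangulated :: "('o,'m,'z) mdc_scheme \<Rightarrow> bool" where
  "is_triangulated C \<longleftrightarrow>
     is_category C \<and> is_additive C \<and> is_shift C \<and>
     \<comment> \<open>shape of triangles\<close>
     (\<forall>f g h. Dtri C f g h \<longrightarrow> (\<exists>X Y Z. f \<in> hom C X Y \<and> g \<in> hom C Y Z \<and> h \<in> hom C Z (Sh C X))) \<and>
     \<comment> \<open>TR1: closure under isomorphism of triangles\<close>
     (\<forall>X Y Z X' Y' Z' f g h f' g' h' u v w.
        Dtri C f g h \<and> f \<in> hom C X Y \<and> g \<in> hom C Y Z \<and> h \<in> hom C Z (Sh C X) \<and>
        f' \<in> hom C X' Y' \<and> g' \<in> hom C Y' Z' \<and> h' \<in> hom C Z' (Sh C X') \<and>
        u \<in> hom C X X' \<and> v \<in> hom C Y Y' \<and> w \<in> hom C Z Z' \<and> iso C u \<and> iso C v \<and> iso C w \<and>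
        Cmp C v f = Cmp C f' u \<and> Cmp C w g = Cmp C g' v \<and> Cmp C (ShM C u) h = Cmp C h' w
        \<longrightarrow> Dtri C f' g' h') \<and>
     \<comment> \<open>TR1: X -id-> X -> 0 -> Sh X is distinguished\<close>
     (\<forall>X Z. is_zero_obj C Z \<longrightarrow> Dtri C (Idm C X) (Zerom C X Z) (Zerom C Z (Sh C X))) \<and>
     \<comment> \<open>TR1: every morphism extends to a distinguished triangle\<close>
     (\<forall>X Y f. f \<in> hom C X Y \<longrightarrow> (\<exists>Z g h. g \<in> hom C Y Z \<and> h \<in> hom C Z (Sh C X) \<and> Dtri C f g h)) \<and>
     \<comment> \<open>TR2: rotation\<close>
     (\<forall>f g h. Dtri C f g h \<longleftrightarrow> Dtri C g h (Negm C (ShM C f))) \<and>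
     \<comment> \<open>TR3: morphisms of triangles\<close>
     (\<forall>X Y Z X' Y' Z' f g h f' g' h' u v.
        Dtri C f g h \<and> f \<in> hom C X Y \<and> g \<in> hom C Y Z \<and> h \<in> hom C Z (Sh C X) \<and>
        Dtri C f' g' h' \<and> f' \<in> hom C X' Y' \<and> g' \<in> hom C Y' Z' \<and> h' \<in> hom C Z' (Sh C X') \<and>
        u \<in> hom C X X' \<and> v \<in> hom C Y Y' \<and> Cmp C v f = Cmp C f' u
        \<longrightarrow> (\<exists>w. w \<in> hom C Z Z' \<and> Cmp C w g = Cmp C g' v \<and> Cmp C (ShM C u) h = Cmp C h' w)) \<and>
     \<comment> \<open>TR4: octahedral axiom\<close>
     (\<forall>X Y Z Z' X' Y' f g f1 f2 g1 g2 h1 h2.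
        f \<in> hom C X Y \<and> g \<in> hom C Y Z \<and>
        f1 \<in> hom C Y Z' \<and> f2 \<in> hom C Z' (Sh C X) \<and> Dtri C f f1 f2 \<and>
        g1 \<in> hom C Z X' \<and> g2 \<in> hom C X' (Sh C Y) \<and> Dtri C g g1 g2 \<and>
        h1 \<in> hom C Z Y' \<and> h2 \<in> hom C Y' (Sh C X) \<and> Dtri C (Cmp C g f) h1 h2
        \<longrightarrow> (\<exists>u v. u \<in> hom C Z' Y' \<and> v \<in> hom C Y' X' \<and>
               Dtri C u v (Cmp C (ShM C f1) g2) \<and>
               Cmp C u f1 = Cmp C h1 g \<and> Cmp C h2 u = f2 \<and>
               Cmp C v h1 = g1 \<and> Cmp C g2 v = Cmp C (ShM C f) h2))"

definition is_monoidal :: "('o,'m,'z) mdc_scheme \<Rightarrow> bool" where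
  "is_monoidal C \<longleftrightarrow>
     (\<forall>X Y X' Y' f g. f \<in> hom C X Y \<longrightarrow> g \<in> hom C X' Y' \<longrightarrow>
        TenM C f g \<in> hom C (Ten C X X') (Ten C Y Y')) \<and>
     (\<forall>X Y. TenM C (Idm C X) (Idm C Y) = Idm C (Ten C X Y)) \<and>
     (\<forall>X Y Z X' Y' Z' f g f' g'. f \<in> hom C X Y \<longrightarrow> g \<in> hom C Y Z \<longrightarrow>
        f' \<in> hom C X' Y' \<longrightarrow> g' \<in> hom C Y' Z' \<longrightarrow>
        TenM C (Cmp C g f) (Cmp C g' f') = Cmp C (TenM C g g') (TenM C f f')) \<and>
     (\<forall>X Y Z. Asc C X Y Z \<in> hom C (Ten C (Ten C X Y) Z) (Ten C X (Ten C Y Z)) \<and> iso C (Asc C X Y Z)) \<and>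
     (\<forall>X. Lu C X \<in> hom C (Ten C (One C) X) X \<and> iso C (Lu C X)) \<and>
     (\<forall>X. Ru C X \<in> hom C (Ten C X (One C)) X \<and> iso C (Ru C X)) \<and>
     (\<forall>X Y Z X' Y' Z' f g h. f \<in> hom C X X' \<longrightarrow> g \<in> hom C Y Y' \<longrightarrow> h \<in> hom C Z Z' \<longrightarrow>
        Cmp C (Asc C X' Y' Z') (TenM C (TenM C f g) h) = Cmp C (TenM C f (TenM C g h)) (Asc C X Y Z)) \<and>
     (\<forall>X Y f. f \<in> hom C X Y \<longrightarrow> Cmp C (Lu C Y) (TenM C (Idm C (One C)) f) = Cmp C f (Lu C X)) \<and>
     (\<forall>X Y f. f \<in> hom C X Y \<longrightarrow> Cmp C (Ru C Y) (TenM C f (Idm C (One C))) = Cmp C f (Ru C X)) \<and>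
     \<comment> \<open>pentagon\<close>
     (\<forall>W X Y Z.
        Cmp C (Asc C W X (Ten C Y Z)) (Asc C (Ten C W X) Y Z) =
        Cmp C (TenM C (Idm C W) (Asc C X Y Z))
          (Cmp C (Asc C W (Ten C X Y) Z) (TenM C (Asc C W X Y) (Idm C Z)))) \<and>
     \<comment> \<open>triangle\<close>
     (\<forall>X Y. Cmp C (TenM C (Idm C X) (Lu C Y)) (Asc C X (One C) Y) = TenM C (Ru C X) (Idm C Y))"

text \<open>Exactness of the tensor product in each variable: for every object A the functors
  - \<otimes> A and A \<otimes> - are additive triangulated functors, the required natural isomorphisms
  with the suspension being ThL and ThR.\<close>
definition is_exact_tensor :: "('o,'m,'z) mdc_scheme \<Rightarrow> bool" where
  "is_exact_tensor C \<longleftrightarrow>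
     (\<forall>A X Y f g. f \<in> hom C X Y \<longrightarrow> g \<in> hom C X Y \<longrightarrow>
        TenM C (Addm C f g) (Idm C A) = Addm C (TenM C f (Idm C A)) (TenM C g (Idm C A)) \<and>
        TenM C (Idm C A) (Addm C f g) = Addm C (TenM C (Idm C A) f) (TenM C (Idm C A) g)) \<and>
     (\<forall>A X. ThL C X A \<in> hom C (Ten C (Sh C X) A) (Sh C (Ten C X A)) \<and> iso C (ThL C X A)) \<and>
     (\<forall>A X. ThR C A X \<in> hom C (Ten C A (Sh C X)) (Sh C (Ten C A X)) \<and> iso C (ThR C A X)) \<and>
     (\<forall>A X Y f. f \<in> hom C X Y \<longrightarrow>
        Cmp C (ThL C Y A) (TenM C (ShM C f) (Idm C A)) = Cmp C (ShM C (TenM C f (Idm C A))) (ThL C X A)) \<and>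
     (\<forall>A X Y f. f \<in> hom C X Y \<longrightarrow>
        Cmp C (ThR C A Y) (TenM C (Idm C A) (ShM C f)) = Cmp C (ShM C (TenM C (Idm C A) f)) (ThR C A X)) \<and>
     (\<forall>A X Y Z f g h. Dtri C f g h \<and> f \<in> hom C X Y \<and> g \<in> hom C Y Z \<and> h \<in> hom C Z (Sh C X) \<longrightarrow>
        Dtri C (TenM C f (Idm C A)) (TenM C g (Idm C A)) (Cmp C (ThL C X A) (TenM C h (Idm C A))) \<and>
        Dtri C (TenM C (Idm C A) f) (TenM C (Idm C A) g) (Cmp C (ThR C A X) (TenM C (Idm C A) h)))"

definition is_MDC :: "('o,'m,'z) mdc_scheme \<Rightarrow> bool" where
  "is_MDC C \<longleftrightarrow> is_triangulated C \<and> is_monoidal C \<and> is_exact_tensor C"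

definition summand :: "('o,'m,'z) mdc_scheme \<Rightarrow> 'o \<Rightarrow> 'o \<Rightarrow> bool" where
  "summand C A B \<longleftrightarrow> (\<exists>i p. i \<in> hom C A B \<and> p \<in> hom C B A \<and> Cmp C p i = Idm C A)"

definition thick :: "('o,'m,'z) mdc_scheme \<Rightarrow> 'o set \<Rightarrow> bool" where
  "thick C S \<longleftrightarrow> S \<noteq> {} \<and>
     (\<forall>X. X \<in> S \<longleftrightarrow> Sh C X \<in> S) \<and>
     (\<forall>X Y Z f g h. Dtri C f g h \<and> f \<in> hom C X Y \<and> g \<in> hom C Y Z \<longrightarrow>
        (X \<in> S \<and> Y \<in> S \<longrightarrow> Z \<in> S) \<and> (Y \<in> S \<and> Z \<in> S \<longrightarrow> X \<in> S) \<and> (X \<in> S \<and> Z \<in> S \<longrightarrow> Y \<in> S)) \<and>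
     (\<forall>A B. summand C A B \<and> B \<in> S \<longrightarrow> A \<in> S)"

definition thick_ideal :: "('o,'m,'z) mdc_scheme \<Rightarrow> 'o set \<Rightarrow> bool" where
  "thick_ideal C I \<longleftrightarrow> thick C I \<and> (\<forall>A \<in> I. \<forall>X. Ten C A X \<in> I \<and> Ten C X A \<in> I)"

definition thick_gen :: "('o,'m,'z) mdc_scheme \<Rightarrow> 'o set \<Rightarrow> 'o set" where
  "thick_gen C S = \<Inter> {T. thick C T \<and> S \<subseteq> T}"

definition ideal_gen :: "('o,'m,'z) mdc_scheme \<Rightarrow> 'o set \<Rightarrow> 'o set" where
  "ideal_gen C S = \<Inter> {I. thick_ideal C I \<and> S \<subseteq> I}"

definition principal_ideal :: "('o,'m,'z) mdc_scheme \<Rightarrow> 'o set \<Rightarrow> bool" where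
  "principal_ideal C I \<longleftrightarrow> (\<exists>A. I = ideal_gen C {A})"

definition proper_ideal :: "('o,'m,'z) mdc_scheme \<Rightarrow> 'o set \<Rightarrow> bool" where
  "proper_ideal C I \<longleftrightarrow> thick_ideal C I \<and> I \<noteq> UNIV"

definition coprime :: "('o,'m,'z) mdc_scheme \<Rightarrow> 'o set \<Rightarrow> 'o set \<Rightarrow> bool" where
  "coprime C I J \<longleftrightarrow> ideal_gen C (I \<union> J) = UNIV"

definition tens_set :: "('o,'m,'z) mdc_scheme \<Rightarrow> 'o set \<Rightarrow> 'o set \<Rightarrow> 'o set" where
  "tens_set C I J = {Ten C A B | A B. A \<in> I \<and> B \<in> J}"

definition prime_ideal :: "('o,'m,'z) mdc_scheme \<Rightarrow> 'o set \<Rightarrow> bool" where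
  "prime_ideal C P \<longleftrightarrow> proper_ideal C P \<and>
     (\<forall>I J. thick_ideal C I \<and> thick_ideal C J \<and> tens_set C I J \<subseteq> P \<longrightarrow> I \<subseteq> P \<or> J \<subseteq> P)"

definition Spc :: "('o,'m,'z) mdc_scheme \<Rightarrow> 'o set set" where
  "Spc C = {P. prime_ideal C P}"

definition prime_radical :: "('o,'m,'z) mdc_scheme \<Rightarrow> 'o set" where
  "prime_radical C = \<Inter> (Spc C)"

definition complementary :: "('o,'m,'z) mdc_scheme \<Rightarrow> 'o set \<Rightarrow> 'o set \<Rightarrow> bool" where
  "complementary C I J \<longleftrightarrow> I \<inter> J \<subseteq> prime_radical C"

definition Vsupp :: "('o,'m,'z) mdc_scheme \<Rightarrow> 'o \<Rightarrow> 'o set set" where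
  "Vsupp C A = {P \<in> Spc C. A \<notin> P}"

text \<open>Closed subsets of Spc: intersections (inside Spc) of families of sets V(A);
  the empty family gives Spc itself.\<close>
definition spc_closed :: "('o,'m,'z) mdc_scheme \<Rightarrow> 'o set set \<Rightarrow> bool" where
  "spc_closed C Z \<longleftrightarrow> (\<exists>S. Z = Spc C \<inter> \<Inter> (Vsupp C ` S))"

definition spc_disconnected :: "('o,'m,'z) mdc_scheme \<Rightarrow> bool" where
  "spc_disconnected C \<longleftrightarrow> (\<exists>Z1 Z2. spc_closed C Z1 \<and> spc_closed C Z2 \<and>
      Z1 \<noteq> Spc C \<and> Z2 \<noteq> Spc C \<and> Z1 \<inter> Z2 = {} \<and> Z1 \<union> Z2 = Spc C)"

definition spc_noetherian :: "('o,'m,'z) mdc_scheme \<Rightarrow> bool" where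
  "spc_noetherian C \<longleftrightarrow> (\<forall>Z :: nat \<Rightarrow> 'o set set.
      (\<forall>n. spc_closed C (Z n)) \<and> (\<forall>n. Z (Suc n) \<subseteq> Z n) \<longrightarrow> (\<exists>N. \<forall>n\<ge>N. Z n = Z N))"

end

theory Submission
  imports Defs
begin

(*
  (a) \<Rightarrow> (b): coprimality of I and J is witnessed by finitely many objects of I \<union> J, and
  finitely many objects of a thick subcategory lie in the thick closure of a single one of
  them, so I and J contain principal ideals that are still coprime.

  (b) \<Rightarrow> (c): the supports V(A) and V(B) of the generators partition Spc K. No prime
  contains both A and B by coprimality, and every prime contains one of them because
  \<langle>A\<rangle> \<otimes> \<langle>B\<rangle> lies in \<langle>A\<rangle> \<inter> \<langle>B\<rangle>, hence in the prime radical.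

  (c) \<Rightarrow> (a): under either extra hypothesis Spc K is quasi-compact (for a generator G
  because a prime containing A \<otimes> G \<otimes> B contains A or B), so the two closed pieces are zero
  loci of finite sets F1, F2. The intersections of the primes in each piece are complementary,
  and they are coprime because the zero locus of a finite set F is a union of supports of
  objects lying in every prime that meets F.
*)

locale MDC =
  fixes C :: "('o,'m,'z) mdc_scheme"
  assumes is_MDC: "is_MDC C"
begin

lemma category: "is_category C" and additive: "is_additive C" and shift: "is_shift C"
  and triangulated: "is_triangulated C" and monoidal: "is_monoidal C"
  and exact_tensor: "is_exact_tensor C"
  using is_MDC unfolding is_MDC_def is_triangulated_def by auto

lemma id_hom [rule_format]: "\<forall>X. Idm C X \<in> hom C X X"
  using category unfolding is_category_def by (elim conjE) assumption

lemma comp_hom [rule_format]: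
  "\<forall>X Y Z f g. f \<in> hom C X Y \<longrightarrow> g \<in> hom C Y Z \<longrightarrow> Cmp C g f \<in> hom C X Z"
  using category unfolding is_category_def by (elim conjE) assumption

lemma comp_id [rule_format]:
  "\<forall>X Y f. f \<in> hom C X Y \<longrightarrow> Cmp C (Idm C Y) f = f \<and> Cmp C f (Idm C X) = f"
  using category unfolding is_category_def by (elim conjE) assumption

lemma neg_hom [rule_format]: "\<forall>X Y f. f \<in> hom C X Y \<longrightarrow> Negm C f \<in> hom C X Y"
  using additive unfolding is_additive_def by (elim conjE) assumption

lemma zero_hom [rule_format]: "\<forall>X Y. Zerom C X Y \<in> hom C X Y"
  using additive unfolding is_additive_def by (elim conjE) assumption

lemma add_assoc [rule_format]:
  "\<forall>X Y f g h. f \<in> hom C X Y \<longrightarrow> g \<in> hom C X Y \<longrightarrow> h \<in> hom C X Y \<longrightarrow>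
    Addm C (Addm C f g) h = Addm C f (Addm C g h)"
  using additive unfolding is_additive_def by (elim conjE) assumption

lemma add_zero_right [rule_format]: "\<forall>X Y f. f \<in> hom C X Y \<longrightarrow> Addm C f (Zerom C X Y) = f"
  using additive unfolding is_additive_def by (elim conjE) assumption

lemma add_neg_right [rule_format]:
  "\<forall>X Y f. f \<in> hom C X Y \<longrightarrow> Addm C f (Negm C f) = Zerom C X Y"
  using additive unfolding is_additive_def by (elim conjE) assumption

lemma comp_add_left [rule_format]:
  "\<forall>X Y Z f g g'. f \<in> hom C X Y \<longrightarrow> g \<in> hom C Y Z \<longrightarrow> g' \<in> hom C Y Z \<longrightarrow>
    Cmp C (Addm C g g') f = Addm C (Cmp C g f) (Cmp C g' f)"
  using additive unfolding is_additive_def by (elim conjE) assumption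

lemma zero_obj_exists: "\<exists>Z. is_zero_obj C Z"
  using additive unfolding is_additive_def by (elim conjE) assumption

lemma zero_obj_hom: "is_zero_obj C Z \<Longrightarrow> hom C Z X = {Zerom C Z X}"
  unfolding is_zero_obj_def by auto

lemma ShM_hom [rule_format]:
  "\<forall>X Y f. f \<in> hom C X Y \<longrightarrow> ShM C f \<in> hom C (Sh C X) (Sh C Y)"
  using shift unfolding is_shift_def by (elim conjE) assumption

lemma ShM_bij [rule_format]: "\<forall>X Y. bij_betw (ShM C) (hom C X Y) (hom C (Sh C X) (Sh C Y))"
  using shift unfolding is_shift_def by (elim conjE) assumption

lemma Sh_essentially_surj [rule_format]: "\<forall>Y. \<exists>X u. u \<in> hom C (Sh C X) Y \<and> iso C u"
  using shift unfolding is_shift_def by (elim conjE) assumption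

lemma dtri_hom [rule_format]:
  "\<forall>f g h. Dtri C f g h \<longrightarrow> (\<exists>X Y Z. f \<in> hom C X Y \<and> g \<in> hom C Y Z \<and> h \<in> hom C Z (Sh C X))"
  using triangulated unfolding is_triangulated_def by (elim conjE) assumption

lemma dtri_iso [unfolded imp_conjL, rule_format]:
  "\<forall>X Y Z X' Y' Z' f g h f' g' h' u v w.
    Dtri C f g h \<and> f \<in> hom C X Y \<and> g \<in> hom C Y Z \<and> h \<in> hom C Z (Sh C X) \<and>
    f' \<in> hom C X' Y' \<and> g' \<in> hom C Y' Z' \<and> h' \<in> hom C Z' (Sh C X') \<and>
    u \<in> hom C X X' \<and> v \<in> hom C Y Y' \<and> w \<in> hom C Z Z' \<and> iso C u \<and> iso C v \<and> iso C w \<and>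
    Cmp C v f = Cmp C f' u \<and> Cmp C w g = Cmp C g' v \<and> Cmp C (ShM C u) h = Cmp C h' w
    \<longrightarrow> Dtri C f' g' h'"
  using triangulated unfolding is_triangulated_def by (elim conjE) assumption

lemma dtri_id_zero [rule_format]:
  "\<forall>X Z. is_zero_obj C Z \<longrightarrow> Dtri C (Idm C X) (Zerom C X Z) (Zerom C Z (Sh C X))"
  using triangulated unfolding is_triangulated_def by (elim conjE) assumption

lemma dtri_extend [rule_format]:
  "\<forall>X Y f. f \<in> hom C X Y \<longrightarrow> (\<exists>Z g h. g \<in> hom C Y Z \<and> h \<in> hom C Z (Sh C X) \<and> Dtri C f g h)"
  using triangulated unfolding is_triangulated_def by (elim conjE) assumption

lemma dtri_rotate [rule_format]: "\<forall>f g h. Dtri C f g h \<longleftrightarrow> Dtri C g h (Negm C (ShM C f))"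
  using triangulated unfolding is_triangulated_def by (elim conjE) assumption

lemma dtri_morphism [unfolded imp_conjL, rule_format]:
  "\<forall>X Y Z X' Y' Z' f g h f' g' h' u v.
    Dtri C f g h \<and> f \<in> hom C X Y \<and> g \<in> hom C Y Z \<and> h \<in> hom C Z (Sh C X) \<and>
    Dtri C f' g' h' \<and> f' \<in> hom C X' Y' \<and> g' \<in> hom C Y' Z' \<and> h' \<in> hom C Z' (Sh C X') \<and>
    u \<in> hom C X X' \<and> v \<in> hom C Y Y' \<and> Cmp C v f = Cmp C f' u
    \<longrightarrow> (\<exists>w. w \<in> hom C Z Z' \<and> Cmp C w g = Cmp C g' v \<and> Cmp C (ShM C u) h = Cmp C h' w)"
  using triangulated unfolding is_triangulated_def by (elim conjE) assumption

lemma TenM_hom [rule_format]: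
  "\<forall>X Y X' Y' f g. f \<in> hom C X Y \<longrightarrow> g \<in> hom C X' Y' \<longrightarrow>
    TenM C f g \<in> hom C (Ten C X X') (Ten C Y Y')"
  using monoidal unfolding is_monoidal_def by (elim conjE) assumption

lemma TenM_id [rule_format]: "\<forall>X Y. TenM C (Idm C X) (Idm C Y) = Idm C (Ten C X Y)"
  using monoidal unfolding is_monoidal_def by (elim conjE) assumption

lemma TenM_comp [rule_format]:
  "\<forall>X Y Z X' Y' Z' f g f' g'. f \<in> hom C X Y \<longrightarrow> g \<in> hom C Y Z \<longrightarrow>
    f' \<in> hom C X' Y' \<longrightarrow> g' \<in> hom C Y' Z' \<longrightarrow>
    TenM C (Cmp C g f) (Cmp C g' f') = Cmp C (TenM C g g') (TenM C f f')"
  using monoidal unfolding is_monoidal_def by (elim conjE) assumption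

lemma Asc [rule_format]:
  "\<forall>X Y Z. Asc C X Y Z \<in> hom C (Ten C (Ten C X Y) Z) (Ten C X (Ten C Y Z)) \<and> iso C (Asc C X Y Z)"
  using monoidal unfolding is_monoidal_def by (elim conjE) assumption

lemma Lu [rule_format]: "\<forall>X. Lu C X \<in> hom C (Ten C (One C) X) X \<and> iso C (Lu C X)"
  using monoidal unfolding is_monoidal_def by (elim conjE) assumption

lemma ThL [rule_format]:
  "\<forall>A X. ThL C X A \<in> hom C (Ten C (Sh C X) A) (Sh C (Ten C X A)) \<and> iso C (ThL C X A)"
  using exact_tensor unfolding is_exact_tensor_def by (elim conjE) assumption

lemma ThR [rule_format]:
  "\<forall>A X. ThR C A X \<in> hom C (Ten C A (Sh C X)) (Sh C (Ten C A X)) \<and> iso C (ThR C A X)"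
  using exact_tensor unfolding is_exact_tensor_def by (elim conjE) assumption

lemma dtri_tensor [unfolded imp_conjL, rule_format]:
  "\<forall>A X Y Z f g h. Dtri C f g h \<and> f \<in> hom C X Y \<and> g \<in> hom C Y Z \<and> h \<in> hom C Z (Sh C X) \<longrightarrow>
    Dtri C (TenM C f (Idm C A)) (TenM C g (Idm C A)) (Cmp C (ThL C X A) (TenM C h (Idm C A))) \<and>
    Dtri C (TenM C (Idm C A) f) (TenM C (Idm C A) g) (Cmp C (ThR C A X) (TenM C (Idm C A) h))"
  using exact_tensor unfolding is_exact_tensor_def by (elim conjE) assumption

lemma comp_id_left: "f \<in> hom C X Y \<Longrightarrow> Cmp C (Idm C Y) f = f"
  using comp_id by blast

lemma comp_id_right: "f \<in> hom C X Y \<Longrightarrow> Cmp C f (Idm C X) = f"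
  using comp_id by blast

lemma dtri_shape: "Dtri C f g h \<Longrightarrow> f \<in> hom C X Y \<Longrightarrow> g \<in> hom C Y Z \<Longrightarrow> h \<in> hom C Z (Sh C X)"
  using dtri_hom[of f g h] unfolding hom_def by auto

lemma add_idem_zero:
  assumes "e \<in> hom C X Y" "Addm C e e = e"
  shows "e = Zerom C X Y"
proof -
  have "Zerom C X Y = Addm C (Addm C e e) (Negm C e)"
    using add_neg_right assms by simp
  also have "\<dots> = Addm C e (Addm C e (Negm C e))"
    using add_assoc assms neg_hom by blast
  also have "\<dots> = e"
    using add_neg_right add_zero_right assms by simp
  finally show ?thesis by simp
qed

lemma comp_zero_left:
  assumes "f \<in> hom C X Y"
  shows "Cmp C (Zerom C Y Z) f = Zerom C X Z"
proof -
  have "Cmp C (Zerom C Y Z) f = Cmp C (Addm C (Zerom C Y Z) (Zerom C Y Z)) f"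
    using add_zero_right zero_hom by simp
  also have "\<dots> = Addm C (Cmp C (Zerom C Y Z) f) (Cmp C (Zerom C Y Z) f)"
    using comp_add_left zero_hom assms by blast
  finally show ?thesis using add_idem_zero comp_hom zero_hom assms by metis
qed

lemma isoI:
  "u \<in> hom C X Y \<Longrightarrow> k \<in> hom C Y X \<Longrightarrow> Cmp C k u = Idm C X \<Longrightarrow> Cmp C u k = Idm C Y \<Longrightarrow> iso C u"
  unfolding iso_def hom_def by auto

lemma iso_id: "iso C (Idm C X)"
  using isoI[OF id_hom id_hom] comp_id_left[OF id_hom] by blast

lemma summand_iso:
  assumes "u \<in> hom C X Y \<and> iso C u"
  shows "summand C X Y" "summand C Y X"
  using assms unfolding iso_def hom_def summand_def by auto

lemma summand_tensor:
  assumes "summand C X Y"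
  shows "summand C (Ten C A X) (Ten C A Y)" "summand C (Ten C X A) (Ten C Y A)"
proof -
  obtain i p where ip: "i \<in> hom C X Y" "p \<in> hom C Y X" "Cmp C p i = Idm C X"
    using assms unfolding summand_def by blast
  have "Cmp C (TenM C (Idm C A) p) (TenM C (Idm C A) i) = Idm C (Ten C A X)"
    using TenM_comp[OF id_hom id_hom ip(1,2)] ip(3) comp_id_left[OF id_hom] TenM_id by simp
  then show "summand C (Ten C A X) (Ten C A Y)"
    unfolding summand_def using TenM_hom[OF id_hom ip(1)] TenM_hom[OF id_hom ip(2)] by blast
  have "Cmp C (TenM C p (Idm C A)) (TenM C i (Idm C A)) = Idm C (Ten C X A)"
    using TenM_comp[OF ip(1,2) id_hom id_hom] ip(3) comp_id_left[OF id_hom] TenM_id by simp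
  then show "summand C (Ten C X A) (Ten C Y A)"
    unfolding summand_def using TenM_hom[OF ip(1) id_hom] TenM_hom[OF ip(2) id_hom] by blast
qed

section \<open>Thick subcategories\<close>

lemma thickD:
  assumes "thick C S"
  shows "S \<noteq> {}" "X \<in> S \<longleftrightarrow> Sh C X \<in> S"
    and "Dtri C f g h \<Longrightarrow> f \<in> hom C X Y \<Longrightarrow> g \<in> hom C Y Z \<Longrightarrow> X \<in> S \<Longrightarrow> Y \<in> S \<Longrightarrow> Z \<in> S"
    and "Dtri C f g h \<Longrightarrow> f \<in> hom C X Y \<Longrightarrow> g \<in> hom C Y Z \<Longrightarrow> Y \<in> S \<Longrightarrow> Z \<in> S \<Longrightarrow> X \<in> S"
    and "summand C A B \<Longrightarrow> B \<in> S \<Longrightarrow> A \<in> S"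
  using assms unfolding thick_def by blast+

lemma thick_iso: "thick C S \<Longrightarrow> u \<in> hom C X Y \<and> iso C u \<Longrightarrow> X \<in> S \<longleftrightarrow> Y \<in> S"
  using thickD(5) summand_iso by blast

lemma thick_tensor_assoc: "thick C S \<Longrightarrow> Ten C (Ten C X Y) Z \<in> S \<longleftrightarrow> Ten C X (Ten C Y Z) \<in> S"
  using thick_iso Asc by blast

lemma thick_zero_obj: "thick C S \<Longrightarrow> is_zero_obj C Z \<Longrightarrow> Z \<in> S"
  using thickD(1,3) dtri_id_zero id_hom zero_hom by blast

lemma thickI:
  assumes "S \<noteq> {}" "\<And>X. X \<in> S \<longleftrightarrow> Sh C X \<in> S"
    and "\<And>X Y Z f g h. Dtri C f g h \<Longrightarrow> f \<in> hom C X Y \<Longrightarrow> g \<in> hom C Y Z \<Longrightarrow>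
      (X \<in> S \<and> Y \<in> S \<longrightarrow> Z \<in> S) \<and> (Y \<in> S \<and> Z \<in> S \<longrightarrow> X \<in> S) \<and> (X \<in> S \<and> Z \<in> S \<longrightarrow> Y \<in> S)"
    and "\<And>A B. summand C A B \<Longrightarrow> B \<in> S \<Longrightarrow> A \<in> S"
  shows "thick C S"
  using assms unfolding thick_def by meson

lemma thick_Inter:
  assumes "\<And>T. T \<in> F \<Longrightarrow> thick C T"
  shows "thick C (\<Inter>F)"
proof (rule thickI)
  obtain Z where "is_zero_obj C Z" using zero_obj_exists by blast
  then show "\<Inter>F \<noteq> {}" using thick_zero_obj assms by blast
  show "X \<in> \<Inter>F \<longleftrightarrow> Sh C X \<in> \<Inter>F" for X
    using assms thickD(2) by blast
  show "(X \<in> \<Inter>F \<and> Y \<in> \<Inter>F \<longrightarrow> Z \<in> \<Inter>F) \<and> (Y \<in> \<Inter>F \<and> Z \<in> \<Inter>F \<longrightarrow> X \<in> \<Inter>F) \<and>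
      (X \<in> \<Inter>F \<and> Z \<in> \<Inter>F \<longrightarrow> Y \<in> \<Inter>F)"
    if "Dtri C f g h" "f \<in> hom C X Y" "g \<in> hom C Y Z" for f g h X Y Z
    using assms that unfolding thick_def by blast
  show "A \<in> \<Inter>F" if "summand C A B" "B \<in> \<Inter>F" for A B
    using assms that thickD(5) by blast
qed

lemma thick_gen_thick: "thick C (thick_gen C S)"
  unfolding thick_gen_def by (rule thick_Inter) simp

lemma thick_gen_min: "thick C T \<Longrightarrow> S \<subseteq> T \<Longrightarrow> thick_gen C S \<subseteq> T"
  unfolding thick_gen_def by blast

text \<open>Preimages under exact functors, with the functor \<open>F\<close> given only on objects.\<close>

lemma thick_preimage:
  assumes S: "thick C S" and nonempty: "{X. F X \<in> S} \<noteq> {}"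
    and shift: "\<And>X. \<exists>u. u \<in> hom C (F (Sh C X)) (Sh C (F X)) \<and> iso C u"
    and triangle: "\<And>f g h X Y Z. Dtri C f g h \<Longrightarrow> f \<in> hom C X Y \<Longrightarrow> g \<in> hom C Y Z \<Longrightarrow>
        \<exists>f' g' h'. Dtri C f' g' h' \<and> f' \<in> hom C (F X) (F Y) \<and> g' \<in> hom C (F Y) (F Z)"
    and summand: "\<And>X Y. summand C X Y \<Longrightarrow> summand C (F X) (F Y)"
  shows "thick C {X. F X \<in> S}"
proof (rule thickI[OF nonempty])
  show "X \<in> {X. F X \<in> S} \<longleftrightarrow> Sh C X \<in> {X. F X \<in> S}" for X
    using shift[of X] thick_iso[OF S] thickD(2)[OF S] by blast
  show "(X \<in> {X. F X \<in> S} \<and> Y \<in> {X. F X \<in> S} \<longrightarrow> Z \<in> {X. F X \<in> S}) \<and>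
      (Y \<in> {X. F X \<in> S} \<and> Z \<in> {X. F X \<in> S} \<longrightarrow> X \<in> {X. F X \<in> S}) \<and>
      (X \<in> {X. F X \<in> S} \<and> Z \<in> {X. F X \<in> S} \<longrightarrow> Y \<in> {X. F X \<in> S})"
    if "Dtri C f g h" "f \<in> hom C X Y" "g \<in> hom C Y Z" for f g h X Y Z
    using triangle[OF that] S unfolding thick_def by blast
  show "A \<in> {X. F X \<in> S}" if "summand C A B" "B \<in> {X. F X \<in> S}" for A B
    using summand[OF that(1)] that(2) thickD(5)[OF S] by blast
qed

section \<open>Thick ideals\<close>

lemma thick_idealD:
  "thick_ideal C I \<Longrightarrow> thick C I"
  "thick_ideal C I \<Longrightarrow> A \<in> I \<Longrightarrow> Ten C A X \<in> I"
  "thick_ideal C I \<Longrightarrow> A \<in> I \<Longrightarrow> Ten C X A \<in> I"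
  unfolding thick_ideal_def by blast+

lemma thick_ideal_iso: "thick_ideal C I \<Longrightarrow> u \<in> hom C X Y \<and> iso C u \<Longrightarrow> X \<in> I \<longleftrightarrow> Y \<in> I"
  using thick_iso thick_idealD(1) by blast

lemma thick_ideal_nonempty: "thick_ideal C I \<Longrightarrow> \<exists>X. X \<in> I"
  using thickD(1) thick_idealD(1) by blast

lemma One_mem_ideal_iff: assumes "thick_ideal C I" shows "One C \<in> I \<longleftrightarrow> I = UNIV"
proof
  assume "One C \<in> I"
  then have "Ten C (One C) X \<in> I" for X using thick_idealD(2)[OF assms] by blast
  then show "I = UNIV" using thick_ideal_iso[OF assms Lu] by blast
qed simp

lemma thick_ideal_Inter: "(\<And>T. T \<in> F \<Longrightarrow> thick_ideal C T) \<Longrightarrow> thick_ideal C (\<Inter>F)"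
  using thick_Inter[of F] unfolding thick_ideal_def by blast

lemma ideal_gen_ideal: "thick_ideal C (ideal_gen C S)"
  unfolding ideal_gen_def by (rule thick_ideal_Inter) auto

lemma ideal_gen_sub: "S \<subseteq> ideal_gen C S"
  unfolding ideal_gen_def by auto

lemma ideal_gen_min: "thick_ideal C I \<Longrightarrow> S \<subseteq> I \<Longrightarrow> ideal_gen C S \<subseteq> I"
  unfolding ideal_gen_def by auto

lemma ideal_gen_mono: "S \<subseteq> T \<Longrightarrow> ideal_gen C S \<subseteq> ideal_gen C T"
  unfolding ideal_gen_def by auto

lemma ideal_gen_singleton_subset: "thick_ideal C P \<Longrightarrow> ideal_gen C {A} \<subseteq> P \<longleftrightarrow> A \<in> P"
  using ideal_gen_min ideal_gen_sub by blast

definition left_colon :: "'o \<Rightarrow> 'o set \<Rightarrow> 'o set" where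
  "left_colon A S = {X. Ten C A X \<in> S}"

definition right_colon :: "'o \<Rightarrow> 'o set \<Rightarrow> 'o set" where
  "right_colon A S = {X. Ten C X A \<in> S}"

lemma ideal_subset_left_colon: "thick_ideal C P \<Longrightarrow> P \<subseteq> S \<Longrightarrow> P \<subseteq> left_colon A S"
  unfolding left_colon_def using thick_idealD(3) by blast

lemma ideal_subset_right_colon: "thick_ideal C P \<Longrightarrow> P \<subseteq> S \<Longrightarrow> P \<subseteq> right_colon A S"
  unfolding right_colon_def using thick_idealD(2) by blast

lemma thick_left_colon:
  assumes S: "thick C S" and P: "thick_ideal C P" "P \<subseteq> S"
  shows "thick C (left_colon A S)"
  unfolding left_colon_def
proof (rule thick_preimage[OF S])
  show "{X. Ten C A X \<in> S} \<noteq> {}"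
    using ideal_subset_left_colon[OF P] thick_ideal_nonempty[OF P(1)] unfolding left_colon_def by blast
  show "\<exists>u. u \<in> hom C (Ten C A (Sh C X)) (Sh C (Ten C A X)) \<and> iso C u" for X
    using ThR by blast
  show "\<exists>f' g' h'. Dtri C f' g' h' \<and> f' \<in> hom C (Ten C A X) (Ten C A Y) \<and> g' \<in> hom C (Ten C A Y) (Ten C A Z)"
    if "Dtri C f g h" "f \<in> hom C X Y" "g \<in> hom C Y Z" for f g h X Y Z
    using dtri_tensor[OF that dtri_shape[OF that]] TenM_hom[OF id_hom that(2)] TenM_hom[OF id_hom that(3)] by blast
qed (rule summand_tensor(1))

lemma thick_right_colon:
  assumes S: "thick C S" and P: "thick_ideal C P" "P \<subseteq> S"
  shows "thick C (right_colon A S)"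
  unfolding right_colon_def
proof (rule thick_preimage[OF S])
  show "{X. Ten C X A \<in> S} \<noteq> {}"
    using ideal_subset_right_colon[OF P] thick_ideal_nonempty[OF P(1)] unfolding right_colon_def by blast
  show "\<exists>u. u \<in> hom C (Ten C (Sh C X) A) (Sh C (Ten C X A)) \<and> iso C u" for X
    using ThL by blast
  show "\<exists>f' g' h'. Dtri C f' g' h' \<and> f' \<in> hom C (Ten C X A) (Ten C Y A) \<and> g' \<in> hom C (Ten C Y A) (Ten C Z A)"
    if "Dtri C f g h" "f \<in> hom C X Y" "g \<in> hom C Y Z" for f g h X Y Z
    using dtri_tensor[OF that dtri_shape[OF that]] TenM_hom[OF that(2) id_hom] TenM_hom[OF that(3) id_hom] by blast
qed (rule summand_tensor(2))

lemma thick_ideal_right_annihilator: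
  assumes P: "thick_ideal C P" and I: "thick_ideal C I"
  shows "thick_ideal C {Y. \<forall>X\<in>I. Ten C X Y \<in> P}"
proof -
  let ?N = "{Y. \<forall>X\<in>I. Ten C X Y \<in> P}"
  have "?N = \<Inter> ((\<lambda>X. left_colon X P) ` I)"
    unfolding left_colon_def by auto
  moreover have "thick C (\<Inter> ((\<lambda>X. left_colon X P) ` I))"
    using thick_left_colon[OF thick_idealD(1)[OF P] P] by (intro thick_Inter) blast
  ultimately have "thick C ?N" by simp
  moreover have "Ten C Z Y \<in> ?N \<and> Ten C Y Z \<in> ?N" if "Y \<in> ?N" for Y Z
    using that thick_idealD(2)[OF I] thick_idealD(2)[OF P]
      thick_tensor_assoc[OF thick_idealD(1)[OF P]] by blast
  ultimately show ?thesis unfolding thick_ideal_def by blast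
qed

lemma thick_ideal_left_annihilator:
  assumes P: "thick_ideal C P" and J: "thick_ideal C J"
  shows "thick_ideal C {X. \<forall>Y\<in>J. Ten C X Y \<in> P}"
proof -
  let ?N = "{X. \<forall>Y\<in>J. Ten C X Y \<in> P}"
  have "?N = \<Inter> ((\<lambda>Y. right_colon Y P) ` J)"
    unfolding right_colon_def by auto
  moreover have "thick C (\<Inter> ((\<lambda>Y. right_colon Y P) ` J))"
    using thick_right_colon[OF thick_idealD(1)[OF P] P] by (intro thick_Inter) blast
  ultimately have "thick C ?N" by simp
  moreover have "Ten C Z X \<in> ?N \<and> Ten C X Z \<in> ?N" if "X \<in> ?N" for X Z
    using that thick_idealD(3)[OF J] thick_idealD(3)[OF P]
      thick_tensor_assoc[OF thick_idealD(1)[OF P]] by blast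
  ultimately show ?thesis unfolding thick_ideal_def by blast
qed

lemma tensor_mem_ideal_gen_union:
  assumes P: "thick_ideal C P" and I: "thick_ideal C I" and J: "thick_ideal C J"
    and IJ: "tens_set C I J \<subseteq> P"
    and X: "X \<in> ideal_gen C (P \<union> I)" and Y: "Y \<in> ideal_gen C (P \<union> J)"
  shows "Ten C X Y \<in> P"
proof -
  have "P \<union> J \<subseteq> {Y. \<forall>X\<in>I. Ten C X Y \<in> P}"
    using IJ thick_idealD(3)[OF P] unfolding tens_set_def by blast
  then have "ideal_gen C (P \<union> J) \<subseteq> {Y. \<forall>X\<in>I. Ten C X Y \<in> P}"
    by (rule ideal_gen_min[OF thick_ideal_right_annihilator[OF P I]])
  then have "P \<union> I \<subseteq> {X. \<forall>Y\<in>ideal_gen C (P \<union> J). Ten C X Y \<in> P}"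
    using thick_idealD(2)[OF P] by blast
  then have "ideal_gen C (P \<union> I) \<subseteq> {X. \<forall>Y\<in>ideal_gen C (P \<union> J). Ten C X Y \<in> P}"
    by (rule ideal_gen_min[OF thick_ideal_left_annihilator[OF P ideal_gen_ideal]])
  then show ?thesis using X Y by blast
qed

section \<open>Prime ideals\<close>

lemma prime_ideal_thick_ideal: "prime_ideal C P \<Longrightarrow> thick_ideal C P"
  unfolding prime_ideal_def proper_ideal_def by blast

lemma prime_ideal_proper: "prime_ideal C P \<Longrightarrow> P \<noteq> UNIV"
  unfolding prime_ideal_def proper_ideal_def by blast

lemma prime_idealD:
  "prime_ideal C P \<Longrightarrow> thick_ideal C I \<Longrightarrow> thick_ideal C J \<Longrightarrow> tens_set C I J \<subseteq> P \<Longrightarrow> I \<subseteq> P \<or> J \<subseteq> P"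
  unfolding prime_ideal_def by blast

lemma thick_ideal_sandwich_set:
  assumes P: "thick_ideal C P"
  shows "thick_ideal C {Y. \<forall>D. Ten C A (Ten C D Y) \<in> P}"
proof -
  let ?T = "{Y. \<forall>D. Ten C A (Ten C D Y) \<in> P}"
  have L: "thick C (left_colon A P)"
    using thick_left_colon[OF thick_idealD(1)[OF P] P] by simp
  have "?T = \<Inter> ((\<lambda>D. left_colon D (left_colon A P)) ` UNIV)"
    unfolding left_colon_def by auto
  moreover have "thick C (\<Inter> ((\<lambda>D. left_colon D (left_colon A P)) ` UNIV))"
    using thick_left_colon[OF L P ideal_subset_left_colon[OF P subset_refl]]
    by (intro thick_Inter) blast
  ultimately have "thick C ?T" by simp
  moreover have "Ten C Z Y \<in> ?T" if "Y \<in> ?T" for Y Z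
  proof -
    have "Ten C A (Ten C D (Ten C Z Y)) \<in> P" for D
      using that thick_tensor_assoc[OF L, of D Z Y] unfolding left_colon_def by simp
    then show ?thesis by simp
  qed
  moreover have "Ten C Y Z \<in> ?T" if "Y \<in> ?T" for Y Z
  proof -
    have "Ten C A (Ten C D (Ten C Y Z)) \<in> P" for D
    proof -
      have "Ten C (Ten C A (Ten C D Y)) Z \<in> P"
        using that thick_idealD(2)[OF P] by blast
      then have "Ten C A (Ten C (Ten C D Y) Z) \<in> P"
        using thick_tensor_assoc[OF thick_idealD(1)[OF P]] by blast
      then show ?thesis
        using thick_tensor_assoc[OF L, of D Y Z] unfolding left_colon_def by simp
    qed
    then show ?thesis by simp
  qed
  ultimately show ?thesis unfolding thick_ideal_def by blast
qed

text \<open>The ideals generated by \<open>A\<close> and \<open>B\<close> tensor into \<open>P\<close> as soon as all the objects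
  \<open>A \<otimes> (D \<otimes> B)\<close> lie in \<open>P\<close>.\<close>

lemma prime_ideal_sandwich:
  assumes prime: "prime_ideal C P" and sandwich: "\<And>D. Ten C A (Ten C D B) \<in> P"
  shows "A \<in> P \<or> B \<in> P"
proof -
  have P: "thick_ideal C P" using prime by (rule prime_ideal_thick_ideal)
  have L: "thick C (left_colon A P)"
    using thick_left_colon[OF thick_idealD(1)[OF P] P] by simp
  have "{B} \<subseteq> {Y. \<forall>D. Ten C A (Ten C D Y) \<in> P}" using sandwich by blast
  then have "ideal_gen C {B} \<subseteq> {Y. \<forall>D. Ten C A (Ten C D Y) \<in> P}"
    by (rule ideal_gen_min[OF thick_ideal_sandwich_set[OF P]])
  moreover have "Ten C A Y \<in> P" if "\<forall>D. Ten C A (Ten C D Y) \<in> P" for Y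
    using that thick_iso[OF L Lu[of Y]] unfolding left_colon_def by simp
  ultimately have "{A} \<subseteq> {X. \<forall>Y\<in>ideal_gen C {B}. Ten C X Y \<in> P}" by blast
  then have "ideal_gen C {A} \<subseteq> {X. \<forall>Y\<in>ideal_gen C {B}. Ten C X Y \<in> P}"
    by (rule ideal_gen_min[OF thick_ideal_left_annihilator[OF P ideal_gen_ideal]])
  then have "tens_set C (ideal_gen C {A}) (ideal_gen C {B}) \<subseteq> P"
    unfolding tens_set_def by blast
  then have "ideal_gen C {A} \<subseteq> P \<or> ideal_gen C {B} \<subseteq> P"
    using prime_idealD[OF prime ideal_gen_ideal ideal_gen_ideal] by blast
  then show ?thesis using ideal_gen_sub[of "{A}"] ideal_gen_sub[of "{B}"] by blast
qed

lemma generator_sandwich: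
  assumes G: "thick_gen C {G} = UNIV" and P: "thick_ideal C P"
    and GB: "Ten C A (Ten C G B) \<in> P"
  shows "Ten C A (Ten C D B) \<in> P"
proof -
  have L: "thick C (left_colon A P)"
    using thick_left_colon[OF thick_idealD(1)[OF P] P] by simp
  have "thick C (right_colon B (left_colon A P))"
    using thick_right_colon[OF L P ideal_subset_left_colon[OF P subset_refl]] .
  moreover have "{G} \<subseteq> right_colon B (left_colon A P)"
    using GB unfolding left_colon_def right_colon_def by simp
  ultimately have "thick_gen C {G} \<subseteq> right_colon B (left_colon A P)"
    by (rule thick_gen_min)
  then show ?thesis using G unfolding left_colon_def right_colon_def by auto
qed

section \<open>Existence of prime ideals\<close>

lemma thick_ideal_directed_Union:
  assumes nonempty: "F \<noteq> {}" and ideals: "\<And>T. T \<in> F \<Longrightarrow> thick_ideal C T"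
    and directed: "\<And>T1 T2. T1 \<in> F \<Longrightarrow> T2 \<in> F \<Longrightarrow> \<exists>T\<in>F. T1 \<subseteq> T \<and> T2 \<subseteq> T"
  shows "thick_ideal C (\<Union>F)"
proof -
  have thick: "thick C T" if "T \<in> F" for T
    using ideals[OF that] by (rule thick_idealD(1))
  have common: "\<exists>T\<in>F. X \<in> T \<and> Z \<in> T" if XZ: "X \<in> \<Union>F" "Z \<in> \<Union>F" for X Z
  proof -
    obtain T1 T2 where "T1 \<in> F" "T2 \<in> F" "X \<in> T1" "Z \<in> T2" using XZ by blast
    then show ?thesis using directed[of T1 T2] by blast
  qed
  have "thick C (\<Union>F)"
  proof (rule thickI)
    show "\<Union>F \<noteq> {}" using nonempty ideals thick_ideal_nonempty by blast
    show "X \<in> \<Union>F \<longleftrightarrow> Sh C X \<in> \<Union>F" for X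
      using thick thickD(2) by blast
    show "(X \<in> \<Union>F \<and> Y \<in> \<Union>F \<longrightarrow> Z \<in> \<Union>F) \<and> (Y \<in> \<Union>F \<and> Z \<in> \<Union>F \<longrightarrow> X \<in> \<Union>F) \<and>
        (X \<in> \<Union>F \<and> Z \<in> \<Union>F \<longrightarrow> Y \<in> \<Union>F)"
      if tri: "Dtri C f g h" "f \<in> hom C X Y" "g \<in> hom C Y Z" for f g h X Y Z
    proof -
      have "(X \<in> T \<and> Y \<in> T \<longrightarrow> Z \<in> T) \<and> (Y \<in> T \<and> Z \<in> T \<longrightarrow> X \<in> T) \<and> (X \<in> T \<and> Z \<in> T \<longrightarrow> Y \<in> T)"
        if "T \<in> F" for T
        using thick[OF that] tri unfolding thick_def by blast
      then show ?thesis using common by (meson UnionI)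
    qed
    show "A \<in> \<Union>F" if "summand C A B" "B \<in> \<Union>F" for A B
      using that thick thickD(5) by blast
  qed
  moreover have "Ten C A X \<in> \<Union>F \<and> Ten C X A \<in> \<Union>F" if "A \<in> \<Union>F" for A X
    using that ideals thick_idealD(2,3) by blast
  ultimately show ?thesis unfolding thick_ideal_def by blast
qed

lemma maximal_ideal_avoiding:
  assumes "thick_ideal C I" "I \<inter> W = {}"
  obtains M where "thick_ideal C M" "I \<subseteq> M" "M \<inter> W = {}"
    and "\<And>K. thick_ideal C K \<Longrightarrow> M \<subseteq> K \<Longrightarrow> K \<inter> W = {} \<Longrightarrow> K = M"
proof -
  define A where "A = {P. thick_ideal C P \<and> I \<subseteq> P \<and> P \<inter> W = {}}"
  have chains: "\<Union>Ch \<in> A" if Ch: "Ch \<noteq> {}" "subset.chain A Ch" for Ch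
  proof -
    have members: "thick_ideal C T \<and> I \<subseteq> T \<and> T \<inter> W = {}" if "T \<in> Ch" for T
      using that Ch(2) unfolding A_def subset_chain_def by blast
    have "thick_ideal C (\<Union>Ch)"
    proof (rule thick_ideal_directed_Union[OF Ch(1)])
      show "thick_ideal C T" if "T \<in> Ch" for T
        using members[OF that] by simp
      show "\<exists>T\<in>Ch. T1 \<subseteq> T \<and> T2 \<subseteq> T" if "T1 \<in> Ch" "T2 \<in> Ch" for T1 T2
        using that Ch(2) unfolding subset_chain_def by (metis sup.order_iff sup_ge2)
    qed
    then show ?thesis using Ch(1) members unfolding A_def by blast
  qed
  have "A \<noteq> {}" using assms unfolding A_def by blast
  then obtain M where "M \<in> A" "\<forall>X\<in>A. M \<subseteq> X \<longrightarrow> X = M"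
    using subset_Zorn_nonempty[of A] chains by blast
  then show ?thesis by (intro that) (auto simp: A_def)
qed

text \<open>The tensor analogue of a multiplicative set; the complement of a prime is one.\<close>

definition m_system :: "'o set \<Rightarrow> bool" where
  "m_system W \<longleftrightarrow> (\<forall>a\<in>W. \<forall>b\<in>W. \<exists>D. ideal_gen C {Ten C a (Ten C D b)} \<inter> W \<noteq> {})"

lemma prime_ideal_avoiding:
  assumes I: "thick_ideal C I" and W: "W \<noteq> {}" "m_system W" and IW: "I \<inter> W = {}"
  obtains P where "prime_ideal C P" "I \<subseteq> P" "P \<inter> W = {}"
proof -
  obtain M where M: "thick_ideal C M" "I \<subseteq> M" "M \<inter> W = {}"
    and maximal: "\<And>K. thick_ideal C K \<Longrightarrow> M \<subseteq> K \<Longrightarrow> K \<inter> W = {} \<Longrightarrow> K = M"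
    using maximal_ideal_avoiding[OF I IW] by blast
  have meets: "ideal_gen C (M \<union> K) \<inter> W \<noteq> {}" if "\<not> K \<subseteq> M" for K
  proof
    assume "ideal_gen C (M \<union> K) \<inter> W = {}"
    then have "ideal_gen C (M \<union> K) = M"
      using maximal[OF ideal_gen_ideal] ideal_gen_sub[of "M \<union> K"] by blast
    then show False using ideal_gen_sub[of "M \<union> K"] that by blast
  qed
  have "prime_ideal C M"
    unfolding prime_ideal_def proper_ideal_def
  proof (intro conjI allI impI)
    show "thick_ideal C M" by (rule M(1))
    show "M \<noteq> UNIV" using W(1) M(3) by blast
    fix I' J' assume IJ: "thick_ideal C I' \<and> thick_ideal C J' \<and> tens_set C I' J' \<subseteq> M"
    show "I' \<subseteq> M \<or> J' \<subseteq> M"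
    proof (rule ccontr)
      assume "\<not> (I' \<subseteq> M \<or> J' \<subseteq> M)"
      then obtain a b where a: "a \<in> ideal_gen C (M \<union> I')" "a \<in> W"
        and b: "b \<in> ideal_gen C (M \<union> J')" "b \<in> W"
        using meets by blast
      then obtain D w where w: "w \<in> ideal_gen C {Ten C a (Ten C D b)}" "w \<in> W"
        using W(2) unfolding m_system_def by blast
      have "Ten C D b \<in> ideal_gen C (M \<union> J')"
        using thick_idealD(3)[OF ideal_gen_ideal b(1)] .
      then have "Ten C a (Ten C D b) \<in> M"
        using tensor_mem_ideal_gen_union[OF M(1) _ _ _ a(1)] IJ by blast
      then have "w \<in> M" using w(1) ideal_gen_min[OF M(1), of "{Ten C a (Ten C D b)}"] by blast
      then show False using w(2) M(3) by blast
    qed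
  qed
  then show ?thesis using that M by blast
qed

lemma prime_ideal_above:
  assumes "thick_ideal C I" "I \<noteq> UNIV"
  obtains P where "prime_ideal C P" "I \<subseteq> P"
proof -
  let ?U = "ideal_gen C {Ten C (One C) (Ten C (One C) (One C))}"
  have "Ten C (One C) (Ten C (One C) (One C)) \<in> ?U" using ideal_gen_sub by blast
  then have "One C \<in> ?U" using thick_ideal_iso[OF ideal_gen_ideal Lu] by blast
  then have "m_system {One C}" unfolding m_system_def by blast
  moreover have "I \<inter> {One C} = {}" using One_mem_ideal_iff[OF assms(1)] assms(2) by blast
  ultimately show ?thesis using prime_ideal_avoiding[OF assms(1)] that by blast
qed

section \<open>Finite generation\<close>

lemma ideal_gen_compact:
  assumes "X \<in> ideal_gen C S"
  obtains F where "finite F" "F \<subseteq> S" "X \<in> ideal_gen C F"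
proof -
  let ?F = "{ideal_gen C F | F. finite F \<and> F \<subseteq> S}"
  have "thick_ideal C (\<Union>?F)"
  proof (rule thick_ideal_directed_Union)
    show "?F \<noteq> {}" by blast
    show "thick_ideal C T" if "T \<in> ?F" for T
      using that ideal_gen_ideal by blast
    show "\<exists>T\<in>?F. T1 \<subseteq> T \<and> T2 \<subseteq> T" if T: "T1 \<in> ?F" "T2 \<in> ?F" for T1 T2
    proof -
      obtain F1 F2 where F: "T1 = ideal_gen C F1" "finite F1" "F1 \<subseteq> S"
        "T2 = ideal_gen C F2" "finite F2" "F2 \<subseteq> S"
        using T by blast
      then have "ideal_gen C (F1 \<union> F2) \<in> ?F" by blast
      moreover have "T1 \<subseteq> ideal_gen C (F1 \<union> F2)" "T2 \<subseteq> ideal_gen C (F1 \<union> F2)"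
        unfolding F(1,4) by (simp_all add: ideal_gen_mono)
      ultimately show ?thesis by blast
    qed
  qed
  moreover have "S \<subseteq> \<Union>?F"
  proof
    fix s assume "s \<in> S"
    then have "ideal_gen C {s} \<in> ?F" by blast
    then show "s \<in> \<Union>?F" using ideal_gen_sub[of "{s}"] by blast
  qed
  ultimately have "ideal_gen C S \<subseteq> \<Union>?F" by (rule ideal_gen_min)
  then show ?thesis using assms that by blast
qed

lemma dtri_zero_id:
  assumes Oz: "is_zero_obj C Oz"
  shows "Dtri C (Zerom C Oz W) (Idm C W) (Zerom C W (Sh C Oz))"
proof -
  let ?w = "Zerom C Oz (Sh C Oz)" and ?n = "Negm C (ShM C (Zerom C Oz W))"
  have n: "?n \<in> hom C (Sh C Oz) (Sh C W)"
    using neg_hom ShM_hom zero_hom by blast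
  have hom_Sh_Oz: "hom C (Sh C Oz) (Sh C Oz) = {ShM C (Zerom C Oz Oz)}"
    using ShM_bij[of Oz Oz] zero_obj_hom[OF Oz, of Oz] unfolding bij_betw_def by simp
  have w: "iso C ?w"
  proof (rule isoI[OF zero_hom zero_hom])
    have "Cmp C (Zerom C (Sh C Oz) Oz) ?w \<in> hom C Oz Oz"
      by (rule comp_hom[OF zero_hom zero_hom])
    then show "Cmp C (Zerom C (Sh C Oz) Oz) ?w = Idm C Oz"
      using id_hom[of Oz] zero_obj_hom[OF Oz, of Oz] by simp
    have "Cmp C ?w (Zerom C (Sh C Oz) Oz) \<in> hom C (Sh C Oz) (Sh C Oz)"
      by (rule comp_hom[OF zero_hom zero_hom])
    then show "Cmp C ?w (Zerom C (Sh C Oz) Oz) = Idm C (Sh C Oz)"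
      using id_hom[of "Sh C Oz"] hom_Sh_Oz by simp
  qed
  have "Dtri C (Idm C W) (Zerom C W (Sh C Oz)) ?n"
  proof (rule dtri_iso[OF dtri_id_zero[OF Oz] id_hom zero_hom zero_hom id_hom zero_hom n
        id_hom id_hom zero_hom iso_id iso_id w])
    show "Cmp C (Idm C W) (Idm C W) = Cmp C (Idm C W) (Idm C W)" by (rule refl)
    show "Cmp C ?w (Zerom C W Oz) = Cmp C (Zerom C W (Sh C Oz)) (Idm C W)"
      using comp_zero_left[OF zero_hom] comp_id_right[OF zero_hom] by simp
    have "Cmp C (ShM C (Idm C W)) (Zerom C Oz (Sh C W)) \<in> hom C Oz (Sh C W)"
      "Cmp C ?n ?w \<in> hom C Oz (Sh C W)"
      using comp_hom[OF zero_hom ShM_hom[OF id_hom]] comp_hom[OF zero_hom n] by blast+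
    then show "Cmp C (ShM C (Idm C W)) (Zerom C Oz (Sh C W)) = Cmp C ?n ?w"
      using zero_obj_hom[OF Oz, of "Sh C W"] by simp
  qed
  then show ?thesis using dtri_rotate by blast
qed

lemma dtri_factor:
  assumes d: "Dtri C f g h" and f: "f \<in> hom C X Y" and g: "g \<in> hom C Y Z"
    and v: "v \<in> hom C Y W" and vf: "Cmp C v f = Zerom C X W"
  obtains w where "w \<in> hom C Z W" "Cmp C w g = v"
proof -
  obtain Oz where Oz: "is_zero_obj C Oz" using zero_obj_exists by blast
  have "Cmp C v f = Cmp C (Zerom C Oz W) (Zerom C X Oz)"
    using vf comp_zero_left[OF zero_hom] by simp
  then obtain w where "w \<in> hom C Z W" "Cmp C w g = Cmp C (Idm C W) v"
    using dtri_morphism[OF d f g dtri_shape[OF d f g] dtri_zero_id[OF Oz] zero_hom id_hom zero_hom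
        zero_hom v]
    by blast
  then show ?thesis using that comp_id_left[OF v] by simp
qed

text \<open>The cone of the zero map \<open>X \<rightarrow> b\<close> is \<open>b \<oplus> \<Sigma>X\<close>: it has \<open>b\<close> as a summand, and then
  \<open>X\<close> from the triangle, so it generates both \<open>b\<close> and \<open>a \<cong> \<Sigma>X\<close>.\<close>

lemma thick_gen_pair:
  assumes S: "thick C S" and "a \<in> S" "b \<in> S"
  shows "\<exists>z\<in>S. {a, b} \<subseteq> thick_gen C {z}"
proof -
  obtain X u where u: "u \<in> hom C (Sh C X) a \<and> iso C u"
    using Sh_essentially_surj by blast
  obtain Z g h where gh: "g \<in> hom C b Z" "h \<in> hom C Z (Sh C X)" "Dtri C (Zerom C X b) g h"
    using dtri_extend[OF zero_hom] by blast
  have "X \<in> S" using thick_iso[OF S u] thickD(2)[OF S] \<open>a \<in> S\<close> by blast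
  then have "Z \<in> S" using thickD(3)[OF S gh(3) zero_hom gh(1)] \<open>b \<in> S\<close> by blast
  moreover have "a \<in> T \<and> b \<in> T" if T: "thick C T" "Z \<in> T" for T
  proof -
    have "Cmp C (Idm C b) (Zerom C X b) = Zerom C X b"
      using comp_id_left[OF zero_hom] .
    then obtain r where "r \<in> hom C Z b" "Cmp C r g = Idm C b"
      using dtri_factor[OF gh(3) zero_hom gh(1) id_hom] by blast
    then have "summand C b Z" using gh(1) unfolding summand_def by blast
    then have "b \<in> T" using thickD(5)[OF T(1)] T(2) by blast
    then have "X \<in> T" using thickD(4)[OF T(1) gh(3) zero_hom gh(1)] T(2) by blast
    then show ?thesis using thickD(2)[OF T(1)] thick_iso[OF T(1) u] \<open>b \<in> T\<close> by blast
  qed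
  ultimately show ?thesis unfolding thick_gen_def by blast
qed

lemma thick_gen_finite:
  assumes S: "thick C S" and "finite F" "F \<subseteq> S"
  shows "\<exists>z\<in>S. F \<subseteq> thick_gen C {z}"
  using assms(2,3)
proof (induction F rule: finite_induct)
  case empty
  then show ?case using thickD(1)[OF S] by blast
next
  case (insert x F)
  then obtain z where z: "z \<in> S" "F \<subseteq> thick_gen C {z}" by blast
  obtain z' where z': "z' \<in> S" "{x, z} \<subseteq> thick_gen C {z'}"
    using thick_gen_pair[OF S _ z(1)] insert(4) by blast
  have "thick_gen C {z} \<subseteq> thick_gen C {z'}"
    using thick_gen_min[OF thick_gen_thick] z'(2) by blast
  then show ?case using z z' by blast
qed

lemma coprime_principal_subideals:
  assumes I: "thick_ideal C I" and J: "thick_ideal C J" and "coprime C I J"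
  obtains A B where "A \<in> I" "B \<in> J" "coprime C (ideal_gen C {A}) (ideal_gen C {B})"
proof -
  have "One C \<in> ideal_gen C (I \<union> J)" using \<open>coprime C I J\<close> unfolding coprime_def by blast
  then obtain F where F: "finite F" "F \<subseteq> I \<union> J" "One C \<in> ideal_gen C F"
    by (rule ideal_gen_compact)
  obtain A where A: "A \<in> I" "F \<inter> I \<subseteq> thick_gen C {A}"
    using thick_gen_finite[OF thick_idealD(1)[OF I], of "F \<inter> I"] F(1) by blast
  obtain B where B: "B \<in> J" "F \<inter> J \<subseteq> thick_gen C {B}"
    using thick_gen_finite[OF thick_idealD(1)[OF J], of "F \<inter> J"] F(1) by blast
  let ?T = "ideal_gen C (ideal_gen C {A} \<union> ideal_gen C {B})"
  have "A \<in> ?T" "B \<in> ?T"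
    using ideal_gen_sub[of "{A}"] ideal_gen_sub[of "{B}"] ideal_gen_sub[of "ideal_gen C {A} \<union> ideal_gen C {B}"]
    by blast+
  then have "thick_gen C {A} \<subseteq> ?T" "thick_gen C {B} \<subseteq> ?T"
    using thick_gen_min[OF thick_idealD(1)[OF ideal_gen_ideal]] by blast+
  then have "F \<subseteq> ?T" using A(2) B(2) F(2) by blast
  then have "One C \<in> ?T" using ideal_gen_min[OF ideal_gen_ideal] F(3) by blast
  then show ?thesis
    using that A(1) B(1) One_mem_ideal_iff[OF ideal_gen_ideal] unfolding coprime_def by blast
qed

definition coprime_complementary_pair :: "'o set \<Rightarrow> 'o set \<Rightarrow> bool" where
  "coprime_complementary_pair I J \<longleftrightarrow>
     proper_ideal C I \<and> proper_ideal C J \<and> coprime C I J \<and> complementary C I J"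

lemma principal_coprime_complementary_pair:
  assumes "coprime_complementary_pair I J"
  obtains A B where "coprime_complementary_pair (ideal_gen C {A}) (ideal_gen C {B})"
proof -
  have I: "proper_ideal C I" and J: "proper_ideal C J" and comp: "complementary C I J"
    and ideals: "thick_ideal C I" "thick_ideal C J" and "coprime C I J"
    using assms unfolding coprime_complementary_pair_def proper_ideal_def by blast+
  obtain A B where "A \<in> I" "B \<in> J" and cop: "coprime C (ideal_gen C {A}) (ideal_gen C {B})"
    using coprime_principal_subideals[OF ideals \<open>coprime C I J\<close>] by blast
  then have "ideal_gen C {A} \<subseteq> I" "ideal_gen C {B} \<subseteq> J"
    using ideal_gen_singleton_subset ideals by blast+
  then have "proper_ideal C (ideal_gen C {A})" "proper_ideal C (ideal_gen C {B})"
    "complementary C (ideal_gen C {A}) (ideal_gen C {B})"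
    using I J comp ideal_gen_ideal unfolding proper_ideal_def complementary_def by blast+
  then show ?thesis using that cop unfolding coprime_complementary_pair_def by blast
qed

section \<open>Disconnecting the spectrum by supports\<close>

lemma spc_closed_Vsupp: "spc_closed C (Vsupp C A)"
  unfolding spc_closed_def Vsupp_def by (rule exI[of _ "{A}"]) auto

lemma spc_disconnected_if_principal_pair:
  assumes "coprime_complementary_pair (ideal_gen C {A}) (ideal_gen C {B})"
  shows "spc_disconnected C"
proof -
  have I: "proper_ideal C (ideal_gen C {A})" and J: "proper_ideal C (ideal_gen C {B})"
    and cop: "coprime C (ideal_gen C {A}) (ideal_gen C {B})"
    and comp: "complementary C (ideal_gen C {A}) (ideal_gen C {B})"
    using assms unfolding coprime_complementary_pair_def by blast+
  have not_both: "A \<notin> P \<or> B \<notin> P" if "prime_ideal C P" for P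
  proof (rule ccontr)
    have P: "thick_ideal C P" using that by (rule prime_ideal_thick_ideal)
    assume "\<not> (A \<notin> P \<or> B \<notin> P)"
    then have "ideal_gen C {A} \<union> ideal_gen C {B} \<subseteq> P"
      using ideal_gen_singleton_subset[OF P] by blast
    then have "P = UNIV" using ideal_gen_min[OF P] cop unfolding coprime_def by blast
    then show False using prime_ideal_proper[OF that] by blast
  qed
  have one: "A \<in> P \<or> B \<in> P" if "prime_ideal C P" for P
  proof -
    have "ideal_gen C {A} \<inter> ideal_gen C {B} \<subseteq> P"
      using comp that unfolding complementary_def prime_radical_def Spc_def by blast
    moreover have "tens_set C (ideal_gen C {A}) (ideal_gen C {B}) \<subseteq> ideal_gen C {A} \<inter> ideal_gen C {B}"
      unfolding tens_set_def using thick_idealD(2,3)[OF ideal_gen_ideal] by blast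
    ultimately have "ideal_gen C {A} \<subseteq> P \<or> ideal_gen C {B} \<subseteq> P"
      using prime_idealD[OF that ideal_gen_ideal ideal_gen_ideal] by blast
    then show ?thesis using ideal_gen_sub by blast
  qed
  have "Vsupp C A \<noteq> Spc C" "Vsupp C B \<noteq> Spc C"
  proof -
    obtain P Q where "prime_ideal C P" "ideal_gen C {A} \<subseteq> P" "prime_ideal C Q" "ideal_gen C {B} \<subseteq> Q"
      using I J prime_ideal_above unfolding proper_ideal_def by metis
    then show "Vsupp C A \<noteq> Spc C" "Vsupp C B \<noteq> Spc C"
      unfolding Vsupp_def Spc_def using ideal_gen_sub by blast+
  qed
  moreover have "Vsupp C A \<inter> Vsupp C B = {}" "Vsupp C A \<union> Vsupp C B = Spc C"
    using not_both one unfolding Vsupp_def Spc_def by blast+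
  ultimately show ?thesis
    unfolding spc_disconnected_def using spc_closed_Vsupp by blast
qed

section \<open>Quasi-compactness of the spectrum\<close>

definition zero_locus :: "'o set \<Rightarrow> 'o set set" where
  "zero_locus S = Spc C \<inter> \<Inter> (Vsupp C ` S)"

lemma mem_zero_locus: "P \<in> zero_locus S \<longleftrightarrow> prime_ideal C P \<and> S \<inter> P = {}"
  unfolding zero_locus_def Vsupp_def Spc_def by auto

lemma zero_locus_antimono: "S \<subseteq> T \<Longrightarrow> zero_locus T \<subseteq> zero_locus S"
  using mem_zero_locus by blast

lemma zero_locus_empty: "zero_locus {} = Spc C"
  unfolding zero_locus_def by simp

lemma spc_closed_iff: "spc_closed C Z \<longleftrightarrow> (\<exists>S. Z = zero_locus S)"
  unfolding spc_closed_def zero_locus_def by blast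

fun sandwich_products :: "'o list \<Rightarrow> 'o set" where
  "sandwich_products [] = {}"
| "sandwich_products [b] = {b}"
| "sandwich_products (b # c # bs) = {Ten C b (Ten C D r) | D r. r \<in> sandwich_products (c # bs)}"

lemma sandwich_products_subset_ideal:
  "thick_ideal C P \<Longrightarrow> B \<in> set bs \<Longrightarrow> B \<in> P \<Longrightarrow> sandwich_products bs \<subseteq> P"
proof (induction bs rule: sandwich_products.induct)
  case (3 b c bs)
  then show ?case
    using thick_idealD(2,3)[OF \<open>thick_ideal C P\<close>] by (cases "B = b") auto
qed auto

lemma sandwich_products_subset_prime:
  "prime_ideal C P \<Longrightarrow> sandwich_products bs \<subseteq> P \<Longrightarrow> bs \<noteq> [] \<Longrightarrow> \<exists>B\<in>set bs. B \<in> P"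
proof (induction bs rule: sandwich_products.induct)
  case (3 b c bs)
  show ?case
  proof (cases "b \<in> P")
    case False
    have "r \<in> P" if "r \<in> sandwich_products (c # bs)" for r
      using prime_ideal_sandwich[OF \<open>prime_ideal C P\<close>, of b r] "3.prems"(2) that False by auto
    then show ?thesis using "3.IH" "3.prems"(1) by auto
  qed simp
qed auto

text \<open>A suitable sandwich product of the objects of \<open>F\<close> lies outside the given point \<open>Q\<close>
  of the locus, but inside every prime that contains one of them.\<close>

lemma zero_locus_finite_union_supports:
  assumes "finite F" "F \<noteq> {}" and Q: "Q \<in> zero_locus F"
  obtains x where "Q \<in> Vsupp C x" "Vsupp C x \<subseteq> zero_locus F"
proof -
  obtain bs where bs: "set bs = F" using finite_list[OF \<open>finite F\<close>] by blast
  have "prime_ideal C Q" "F \<inter> Q = {}" using Q mem_zero_locus by blast+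
  then obtain x where x: "x \<in> sandwich_products bs" "x \<notin> Q"
    using sandwich_products_subset_prime[of Q bs] bs \<open>F \<noteq> {}\<close> by blast
  have "P \<in> zero_locus F" if "P \<in> Vsupp C x" for P
  proof -
    have "prime_ideal C P" "x \<notin> P" using that unfolding Vsupp_def Spc_def by blast+
    then show ?thesis
      using sandwich_products_subset_ideal[OF prime_ideal_thick_ideal] x(1) bs mem_zero_locus by blast
  qed
  moreover have "Q \<in> Vsupp C x" using \<open>prime_ideal C Q\<close> x(2) unfolding Vsupp_def Spc_def by blast
  ultimately show ?thesis using that by blast
qed

definition quasi_compact :: bool where
  "quasi_compact \<longleftrightarrow> (\<forall>S. zero_locus S = {} \<longrightarrow> (\<exists>F. finite F \<and> F \<subseteq> S \<and> zero_locus F = {}))"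

text \<open>The words form an m-system containing \<open>S\<close>, and by \<open>generator_sandwich\<close> a prime
  containing a word contains one of its letters.\<close>

inductive word :: "'o \<Rightarrow> 'o set \<Rightarrow> 'o \<Rightarrow> 'o set \<Rightarrow> bool" for G S where
  letter: "s \<in> S \<Longrightarrow> word G S s {s}"
| sandwich: "word G S a F1 \<Longrightarrow> word G S b F2 \<Longrightarrow> word G S (Ten C a (Ten C G b)) (F1 \<union> F2)"

lemma word_letters: "word G S w F \<Longrightarrow> finite F \<and> F \<subseteq> S"
  by (induction rule: word.induct) auto

lemma word_in_prime:
  assumes G: "thick_gen C {G} = UNIV"
  shows "word G S w F \<Longrightarrow> prime_ideal C P \<Longrightarrow> w \<in> P \<Longrightarrow> F \<inter> P \<noteq> {}"
proof (induction rule: word.induct)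
  case (sandwich a F1 b F2)
  have "Ten C a (Ten C D b) \<in> P" for D
    using generator_sandwich[OF G prime_ideal_thick_ideal] sandwich.prems by blast
  then have "a \<in> P \<or> b \<in> P" using prime_ideal_sandwich[OF sandwich.prems(1)] by blast
  then show ?case using sandwich.IH sandwich.prems(1) by blast
qed simp

lemma quasi_compact_if_generator:
  assumes G: "thick_gen C {G} = UNIV"
  shows quasi_compact
  unfolding quasi_compact_def
proof (intro allI impI)
  fix S assume S: "zero_locus S = {}"
  show "\<exists>F. finite F \<and> F \<subseteq> S \<and> zero_locus F = {}"
  proof (cases "S = {}")
    case False
    define W where "W = {w. \<exists>F. word G S w F}"
    have "S \<subseteq> W" unfolding W_def using word.letter by blast
    have "m_system W"
      unfolding m_system_def
    proof (intro ballI)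
      fix a b assume "a \<in> W" "b \<in> W"
      then obtain Fa Fb where "word G S a Fa" "word G S b Fb" unfolding W_def by blast
      then have "word G S (Ten C a (Ten C G b)) (Fa \<union> Fb)" by (rule word.sandwich)
      then have "Ten C a (Ten C G b) \<in> W" unfolding W_def by blast
      moreover have "Ten C a (Ten C G b) \<in> ideal_gen C {Ten C a (Ten C G b)}"
        using ideal_gen_sub by blast
      ultimately have "ideal_gen C {Ten C a (Ten C G b)} \<inter> W \<noteq> {}" by blast
      then show "\<exists>D. ideal_gen C {Ten C a (Ten C D b)} \<inter> W \<noteq> {}" by (rule exI)
    qed
    have "ideal_gen C {} \<inter> W \<noteq> {}"
    proof
      assume "ideal_gen C {} \<inter> W = {}"
      moreover have "W \<noteq> {}" using False \<open>S \<subseteq> W\<close> by blast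
      ultimately obtain P where "prime_ideal C P" "P \<inter> W = {}"
        using prime_ideal_avoiding[OF ideal_gen_ideal _ \<open>m_system W\<close>] by blast
      then have "P \<in> zero_locus S" using \<open>S \<subseteq> W\<close> mem_zero_locus by blast
      then show False using S by simp
    qed
    then obtain w F where w: "w \<in> ideal_gen C {}" "word G S w F" unfolding W_def by blast
    have "F \<inter> P \<noteq> {}" if "prime_ideal C P" for P
      using word_in_prime[OF G w(2) that] w(1) ideal_gen_min[OF prime_ideal_thick_ideal[OF that]]
      by blast
    then show ?thesis using word_letters[OF w(2)] mem_zero_locus by blast
  qed (use S in blast)
qed

lemma zero_locus_insert_strict:
  assumes "F \<subseteq> S" "zero_locus F \<noteq> zero_locus S"
  shows "\<exists>s\<in>S. zero_locus (insert s F) \<noteq> zero_locus F"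
proof -
  obtain P where "P \<in> zero_locus F" "P \<notin> zero_locus S"
    using assms zero_locus_antimono[OF assms(1)] by blast
  then have "S \<inter> P \<noteq> {}" "F \<inter> P = {}" "prime_ideal C P"
    unfolding mem_zero_locus by blast+
  then obtain s where "s \<in> S" "s \<in> P" by blast
  then have "P \<notin> zero_locus (insert s F)" unfolding mem_zero_locus by blast
  then show ?thesis using \<open>s \<in> S\<close> \<open>P \<in> zero_locus F\<close> by blast
qed

lemma zero_locus_finite_if_noetherian:
  assumes N: "spc_noetherian C"
  shows "\<exists>F. finite F \<and> F \<subseteq> S \<and> zero_locus F = zero_locus S"
proof (rule ccontr)
  assume "\<nexists>F. finite F \<and> F \<subseteq> S \<and> zero_locus F = zero_locus S"
  then have "\<exists>s\<in>S. zero_locus (insert s F) \<noteq> zero_locus F" if "finite F" "F \<subseteq> S" for F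
    using zero_locus_insert_strict that by blast
  then obtain next_obj where next_obj: "\<And>F. finite F \<Longrightarrow> F \<subseteq> S \<Longrightarrow>
      next_obj F \<in> S \<and> zero_locus (insert (next_obj F) F) \<noteq> zero_locus F"
    by metis
  define Fs where "Fs n = ((\<lambda>F. insert (next_obj F) F) ^^ n) {}" for n
  have Fs_Suc: "Fs (Suc n) = insert (next_obj (Fs n)) (Fs n)" for n
    unfolding Fs_def by simp
  have Fs: "finite (Fs n) \<and> Fs n \<subseteq> S" for n
    by (induction n) (simp_all add: Fs_Suc next_obj, simp add: Fs_def)
  have "(\<forall>n. spc_closed C (zero_locus (Fs n))) \<and> (\<forall>n. zero_locus (Fs (Suc n)) \<subseteq> zero_locus (Fs n))"
    using spc_closed_iff zero_locus_antimono[OF subset_insertI] unfolding Fs_Suc by blast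
  then have "\<exists>N. \<forall>n\<ge>N. zero_locus (Fs n) = zero_locus (Fs N)"
    by (rule N[unfolded spc_noetherian_def, rule_format])
  then obtain N where "\<forall>n\<ge>N. zero_locus (Fs n) = zero_locus (Fs N)" ..
  then have "zero_locus (Fs (Suc N)) = zero_locus (Fs N)"
    using le_SucI[OF order_refl] by blast
  moreover have "zero_locus (Fs (Suc N)) \<noteq> zero_locus (Fs N)"
    using next_obj Fs[of N] unfolding Fs_Suc by blast
  ultimately show False by simp
qed

lemma quasi_compact_if_noetherian: "spc_noetherian C \<Longrightarrow> quasi_compact"
  unfolding quasi_compact_def using zero_locus_finite_if_noetherian by metis

section \<open>Coprime complementary ideals from a disconnection\<close>

lemma finite_disconnection:
  assumes qc: quasi_compact and "spc_disconnected C"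
  obtains F1 F2 where "finite F1" "finite F2" "zero_locus F1 \<union> zero_locus F2 = Spc C"
    "zero_locus F1 \<inter> zero_locus F2 = {}" "zero_locus F1 \<noteq> Spc C" "zero_locus F2 \<noteq> Spc C"
proof -
  obtain S1 S2 where S: "zero_locus S1 \<union> zero_locus S2 = Spc C" "zero_locus S1 \<inter> zero_locus S2 = {}"
    "zero_locus S1 \<noteq> Spc C" "zero_locus S2 \<noteq> Spc C"
    using \<open>spc_disconnected C\<close> unfolding spc_disconnected_def spc_closed_iff by blast
  have "P \<notin> zero_locus (S1 \<union> S2)" for P
  proof -
    have "P \<notin> zero_locus S1 \<or> P \<notin> zero_locus S2" using S(2) by blast
    then show ?thesis unfolding mem_zero_locus by blast
  qed
  then have "zero_locus (S1 \<union> S2) = {}" by blast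
  then have "\<exists>F. finite F \<and> F \<subseteq> S1 \<union> S2 \<and> zero_locus F = {}"
    by (rule qc[unfolded quasi_compact_def, rule_format])
  then obtain F where F: "finite F" "F \<subseteq> S1 \<union> S2" "zero_locus F = {}" by blast
  let ?F1 = "F \<inter> S1" and ?F2 = "F \<inter> S2"
  have sup: "zero_locus S1 \<subseteq> zero_locus ?F1" "zero_locus S2 \<subseteq> zero_locus ?F2"
    by (simp_all add: zero_locus_antimono)
  have "P \<notin> zero_locus ?F1 \<inter> zero_locus ?F2" for P
  proof -
    have "P \<notin> zero_locus F" using F(3) by blast
    then show ?thesis using F(2) unfolding Int_iff mem_zero_locus by blast
  qed
  then have disj: "zero_locus ?F1 \<inter> zero_locus ?F2 = {}" by blast
  have "zero_locus ?F1 \<subseteq> Spc C" "zero_locus ?F2 \<subseteq> Spc C"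
    unfolding zero_locus_def by blast+
  then have "zero_locus ?F1 = zero_locus S1" "zero_locus ?F2 = zero_locus S2"
    using S(1) sup disj by blast+
  then show ?thesis using that[of ?F1 ?F2] F(1) S by simp
qed

lemma not_Inter_subset_if_in_finite_zero_locus:
  assumes "finite F" "zero_locus F \<noteq> Spc C" "Q \<in> zero_locus F"
    and "Z \<subseteq> Spc C" "Z \<inter> zero_locus F = {}"
  shows "\<not> \<Inter>Z \<subseteq> Q"
proof -
  have "F \<noteq> {}" using assms(2) zero_locus_empty by blast
  then obtain x where x: "Q \<in> Vsupp C x" "Vsupp C x \<subseteq> zero_locus F"
    using zero_locus_finite_union_supports assms(1,3) by blast
  have "x \<in> P" if "P \<in> Z" for P
    using that x(2) assms(4,5) unfolding Vsupp_def by blast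
  then show ?thesis using x(1) unfolding Vsupp_def by blast
qed

lemma proper_ideal_Inter_primes:
  assumes "Z \<subseteq> Spc C" "Z \<noteq> {}"
  shows "proper_ideal C (\<Inter>Z)"
proof -
  have primes: "prime_ideal C P" if "P \<in> Z" for P
    using that assms(1) unfolding Spc_def by blast
  then have "thick_ideal C (\<Inter>Z)"
    using thick_ideal_Inter prime_ideal_thick_ideal by metis
  moreover obtain P where "P \<in> Z" using assms(2) by blast
  then have "\<Inter>Z \<noteq> UNIV" using prime_ideal_proper[OF primes] by blast
  ultimately show ?thesis unfolding proper_ideal_def by blast
qed

lemma coprime_complementary_pair_if_disconnected:
  assumes "quasi_compact" "spc_disconnected C"
  shows "\<exists>I J. coprime_complementary_pair I J"
proof -
  obtain F1 F2 where F: "finite F1" "finite F2" "zero_locus F1 \<union> zero_locus F2 = Spc C"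
    "zero_locus F1 \<inter> zero_locus F2 = {}" "zero_locus F1 \<noteq> Spc C" "zero_locus F2 \<noteq> Spc C"
    using finite_disconnection[OF assms] by blast
  let ?I = "\<Inter>(zero_locus F1)" and ?J = "\<Inter>(zero_locus F2)"
  have proper: "proper_ideal C ?I" "proper_ideal C ?J"
    using proper_ideal_Inter_primes F(3,5,6) by blast+
  have "complementary C ?I ?J"
    unfolding complementary_def prime_radical_def using F(3) by blast
  moreover have "coprime C ?I ?J"
    unfolding coprime_def
  proof (rule ccontr)
    assume "ideal_gen C (?I \<union> ?J) \<noteq> UNIV"
    then obtain Q where "prime_ideal C Q" "ideal_gen C (?I \<union> ?J) \<subseteq> Q"
      using prime_ideal_above[OF ideal_gen_ideal] by blast
    then have "Q \<in> zero_locus F1 \<union> zero_locus F2" "?I \<subseteq> Q" "?J \<subseteq> Q"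
      using F(3) ideal_gen_sub[of "?I \<union> ?J"] unfolding Spc_def by blast+
    then show False
      using not_Inter_subset_if_in_finite_zero_locus[OF F(1) F(5), of Q "zero_locus F2"]
        not_Inter_subset_if_in_finite_zero_locus[OF F(2) F(6), of Q "zero_locus F1"] F(3,4)
      by blast
  qed
  ultimately show ?thesis using proper unfolding coprime_complementary_pair_def by blast
qed

end

theorem theoremB:
  fixes C :: "('o, 'm) mdc"
  assumes "is_MDC C"
  defines "a \<equiv> (\<exists>I J. proper_ideal C I \<and> proper_ideal C J \<and> coprime C I J \<and> complementary C I J)"
      and "b \<equiv> (\<exists>I J. principal_ideal C I \<and> principal_ideal C J \<and> proper_ideal C I \<and> proper_ideal C J \<and>
                       coprime C I J \<and> complementary C I J)"
      and "c \<equiv> spc_disconnected C"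
  shows "(a \<longleftrightarrow> b) \<and> (a \<longrightarrow> c) \<and>
         ((\<exists>G. thick_gen C {G} = UNIV) \<or> spc_noetherian C \<longrightarrow> (a \<longleftrightarrow> c) \<and> (b \<longleftrightarrow> c))"
proof -
  interpret MDC C by (rule MDC.intro) (rule assms(1))
  have a: "a \<longleftrightarrow> (\<exists>I J. coprime_complementary_pair I J)"
    unfolding a_def coprime_complementary_pair_def by simp
  have b: "b \<longleftrightarrow> (\<exists>A B. coprime_complementary_pair (ideal_gen C {A}) (ideal_gen C {B}))"
    unfolding b_def principal_ideal_def coprime_complementary_pair_def by blast
  have "a \<longrightarrow> b"
    unfolding a b using principal_coprime_complementary_pair by metis
  moreover have "b \<longrightarrow> a"
    unfolding a b by blast
  moreover have "b \<longrightarrow> c"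
    unfolding b c_def using spc_disconnected_if_principal_pair by blast
  moreover have "c \<longrightarrow> a" if "(\<exists>G. thick_gen C {G} = UNIV) \<or> spc_noetherian C"
  proof
    have quasi_compact
      using that quasi_compact_if_generator quasi_compact_if_noetherian by blast
    moreover assume c
    ultimately show a
      unfolding a c_def by (rule coprime_complementary_pair_if_disconnected)
  qed
  ultimately show ?thesis by blast
qed

end
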